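(* Let $c\in\mathbb{R}$, $\sigma^2>0$, $\gamma=0$, and $\alpha_0=1$. Define recursively, for $n\ge2$, $$\alpha_{n-1}=\frac{\lambda^{n-1}\sigma^2+(1-\delta^{n-1})^2c^2}{\lambda^{n-1}\sigma^2+(1-\delta^{n-1})^2c^2+\sigma^2},$$ where $\delta^1=\alpha_0$, $\lambda^1=\alpha_0^2$, and for $m>1$, $\delta^m=\alpha_{m-1}+(1-\alpha_{m-1})\delta^{m-1}$, $\lambda^m=\alpha_{m-1}^2+(1-\alpha_{m-1})^2\lambda^{m-1}$. Then $\alpha_{n-1}=\frac1n$ for all $n\ge1$.
   Context: This is the prediction-error-minimizing stepsize rule for approximate value iteration in a single-state, single-action problem with i.i.d. rewards of mean $c$ and variance $\sigma^2$, specialized to discount factor $\gamma=0$ (the stationary case). *)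

theory Defs
  imports Complex_Main
begin

text \<open>Prediction-error-minimizing stepsizes, single state/action, discount gamma = 0.
  pem_step c s2 k = (alpha_k, delta^(k+1), lambda^(k+1)), where s2 is sigma^2.\<close>
fun pem_step :: "real \<Rightarrow> real \<Rightarrow> nat \<Rightarrow> real \<times> real \<times> real" where
  "pem_step c s2 0 = (1, 1, 1)"
| "pem_step c s2 (Suc k) =
     (let (a, d, l) = pem_step c s2 k;
          a' = (l * s2 + (1 - d)^2 * c^2) / (l * s2 + (1 - d)^2 * c^2 + s2)
      in (a', a' + (1 - a') * d, a'^2 + (1 - a')^2 * l))"

definition pem_alpha :: "real \<Rightarrow> real \<Rightarrow> nat \<Rightarrow> real" where
  "pem_alpha c s2 k = fst (pem_step c s2 k)"

definition pem_delta :: "real \<Rightarrow> real \<Rightarrow> nat \<Rightarrow> real" where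
  "pem_delta c s2 m = fst (snd (pem_step c s2 (m - 1)))"

definition pem_lambda :: "real \<Rightarrow> real \<Rightarrow> nat \<Rightarrow> real" where
  "pem_lambda c s2 m = snd (snd (pem_step c s2 (m - 1)))"

end

theory Submission
  imports Defs
begin

text \<open>With \<open>\<alpha>\<^sub>0 = 1\<close> we get \<open>\<delta>\<^sup>1 = 1\<close>, which kills the bias term \<open>(1 - \<delta>)\<^sup>2 c\<^sup>2\<close>;
  the update of \<open>\<delta>\<close> then keeps \<open>\<delta> = 1\<close> forever. Without the bias the stepsize is
  \<open>\<lambda> \<sigma>\<^sup>2 / (\<lambda> \<sigma>\<^sup>2 + \<sigma>\<^sup>2) = \<lambda> / (\<lambda> + 1)\<close>, and \<open>\<lambda> = \<alpha> = 1/n\<close> is an invariant of the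
  recursion, since \<open>1/n\<close> is mapped to \<open>1/(n+1)\<close> and
  \<open>(1/(n+1))\<^sup>2 + (n/(n+1))\<^sup>2 / n = 1/(n+1)\<close>.\<close>

lemma unbiased_stepsize_harmonic:
  fixes s2 x :: real
  assumes "s2 > 0" and "x > 0"
  shows "(1 / x * s2) / (1 / x * s2 + s2) = 1 / (x + 1)"
proof -
  have "1 / x * s2 + s2 = s2 * (x + 1) / x"
    using assms by (simp add: field_simps)
  then show ?thesis
    using assms by simp
qed

lemma variance_update_harmonic:
  fixes x :: real
  assumes "x > 0"
  shows "(1 / (x + 1))\<^sup>2 + (1 - 1 / (x + 1))\<^sup>2 * (1 / x) = 1 / (x + 1)"
proof -
  have "1 - 1 / (x + 1) = x / (x + 1)"
    using assms by (simp add: field_simps)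
  then have "(1 / (x + 1))\<^sup>2 + (1 - 1 / (x + 1))\<^sup>2 * (1 / x) = (1 + x) / (x + 1)\<^sup>2"
    using assms by (simp add: power_divide power2_eq_square add_divide_distrib)
  then show ?thesis
    by (simp add: power2_eq_square add.commute)
qed

lemma pem_step_harmonic:
  assumes "s2 > 0"
  shows "pem_step c s2 k = (1 / real (Suc k), 1, 1 / real (Suc k))"
proof (induction k)
  case 0
  show ?case by simp
next
  case (Suc k)
  then show ?case
    using unbiased_stepsize_harmonic[OF assms, of "real (Suc k)"]
      variance_update_harmonic[of "real (Suc k)"]
    by (simp add: Let_def)
qed

theorem corollary3:
  fixes c s2 :: real and n :: nat
  assumes "s2 > 0" and "n \<ge> 1"
  shows "pem_alpha c s2 (n - 1) = 1 / real n"
  using pem_step_harmonic[OF assms(1), of c "n - 1"] assms(2)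
  by (simp add: pem_alpha_def)

end
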